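(* Let $P\subset\mathbb R^2$ be a convex lattice polygon with nonzero area $A(P)$ and $h=\operatorname{ls}_\square(P)$. Then $A(P)\ge\frac12 h$, with equality if and only if $P$ is lattice-equivalent to $\operatorname{conv}\{(0,0),(h,0),(0,1)\}$.
   Context: A lattice polygon is a convex polygon all of whose vertices lie in $\mathbb Z^2$. An affine unimodular transformation is $x\mapsto Ax+v$ with $A\in\mathbb Z^{2\times2}$, $\det A=\pm1$, $v\in\mathbb Z^2$; two sets are lattice-equivalent if one is the image of the other under such a map. With $\square=[0,1]^2$, $\operatorname{ls}_\square(P)$ is the smallest $l\ge0$ such that $\varphi(P)\subseteq l\square$ for some affine unimodular $\varphi$. *)

theory Defs
  imports "HOL-Analysis.Analysis"
begin

definition lattice_point :: "real \<times> real \<Rightarrow> bool" where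
  "lattice_point p \<longleftrightarrow> fst p \<in> \<int> \<and> snd p \<in> \<int>"

definition lattice_polygon :: "(real \<times> real) set \<Rightarrow> bool" where
  "lattice_polygon P \<longleftrightarrow> (\<exists>V. finite V \<and> (\<forall>v\<in>V. lattice_point v) \<and> P = convex hull V)"

text \<open>Affine map x \<mapsto> A x + v with A = ((a,b),(c,d)) integral and v = (e,f) integral.\<close>
definition aff_map :: "int \<Rightarrow> int \<Rightarrow> int \<Rightarrow> int \<Rightarrow> int \<Rightarrow> int \<Rightarrow> real \<times> real \<Rightarrow> real \<times> real" where
  "aff_map a b c d e f p =
     (of_int a * fst p + of_int b * snd p + of_int e,
      of_int c * fst p + of_int d * snd p + of_int f)"

definition affine_unimodular :: "(real \<times> real \<Rightarrow> real \<times> real) \<Rightarrow> bool" where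
  "affine_unimodular \<phi> \<longleftrightarrow>
     (\<exists>a b c d e f. \<bar>a * d - b * c\<bar> = 1 \<and> \<phi> = aff_map a b c d e f)"

definition lattice_equivalent :: "(real \<times> real) set \<Rightarrow> (real \<times> real) set \<Rightarrow> bool" where
  "lattice_equivalent P Q \<longleftrightarrow> (\<exists>\<phi>. affine_unimodular \<phi> \<and> \<phi> ` P = Q)"

definition scaled_square :: "real \<Rightarrow> (real \<times> real) set" where
  "scaled_square l = {p. 0 \<le> fst p \<and> fst p \<le> l \<and> 0 \<le> snd p \<and> snd p \<le> l}"

definition ls_square :: "(real \<times> real) set \<Rightarrow> real" where
  "ls_square P = Inf {l. 0 \<le> l \<and> (\<exists>\<phi>. affine_unimodular \<phi> \<and> \<phi> ` P \<subseteq> scaled_square l)}"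

definition area :: "(real \<times> real) set \<Rightarrow> real" where
  "area P = measure lborel P"

end

theory Submission
  imports Defs
begin

text \<open>
  Let V be the lattice vertices of P and w their lattice width, attained in a primitive direction.
  A unimodular change of coordinates puts V into the strip 0 \<le> y \<le> w with vertices p, q on
  its two boundary lines, and a shear makes the horizontal offset of q from p at most w/2.

  If w = 1, the vertices lie on two adjacent rows. When both rows carry a segment, P fits
  into the square whose side is the longer segment, and the quadrangle spanned by the two
  segments has area exceeding half of it; when one row is a single point, P is a unimodular
  image of conv{(0,0),(l,0),(0,1)}.

  If w \<ge> 2, P fits into the square of side X, the horizontal extent of V (as X \<ge> w).
  The extent G of V normal to pq satisfies 2 w X \<le> 2 G + w^2, and the two triangles over pq
  give area \<ge> G/2 > X/2, except when w = X = G = 2, where a quadrangle over the diagonal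
  of the bounding box does the job.

  So either A(P) > l/2 for some l with P inside a lattice copy of l\<box>, or P is lattice-equivalent
  to the triangle of base l, of area l/2; since ls(P) \<le> l, both the inequality and its
  equality case follow.
\<close>

section \<open>Affine maps with integer coefficients\<close>

text \<open>aff_map generalised to any commutative ring, so that one map acts both on the lattice
  and on the plane.\<close>
definition int_aff ::
    "int \<Rightarrow> int \<Rightarrow> int \<Rightarrow> int \<Rightarrow> int \<Rightarrow> int \<Rightarrow> 'a::comm_ring_1 \<times> 'a \<Rightarrow> 'a \<times> 'a" where
  "int_aff a b c d e f p =
     (of_int a * fst p + of_int b * snd p + of_int e, of_int c * fst p + of_int d * snd p + of_int f)"

definition unimodular_map :: "('a::comm_ring_1 \<times> 'a \<Rightarrow> 'a \<times> 'a) \<Rightarrow> bool" where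
  "unimodular_map h \<longleftrightarrow> (\<exists>a b c d e f. \<bar>a * d - b * c\<bar> = 1 \<and> h = int_aff a b c d e f)"

definition cross2 :: "'a::comm_ring \<times> 'a \<Rightarrow> 'a \<times> 'a \<Rightarrow> 'a" where
  "cross2 u v = fst u * snd v - snd u * fst v"

definition of_int_pair :: "int \<times> int \<Rightarrow> 'a::ring_1 \<times> 'a" where
  "of_int_pair p = (of_int (fst p), of_int (snd p))"

lemma affine_unimodular_iff_unimodular_map: "affine_unimodular \<phi> \<longleftrightarrow> unimodular_map \<phi>"
proof -
  have "aff_map = int_aff" by (intro ext) (simp add: aff_map_def int_aff_def)
  then show ?thesis by (simp add: affine_unimodular_def unimodular_map_def)
qed

lemma int_aff_int:
  "int_aff a b c d e f (p :: int \<times> int) = (a * fst p + b * snd p + e, c * fst p + d * snd p + f)"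
  by (simp add: int_aff_def)

lemma unimodular_map_int_aff: "\<bar>a * d - b * c\<bar> = 1 \<Longrightarrow> unimodular_map (int_aff a b c d e f)"
  unfolding unimodular_map_def by blast

lemma int_aff_comp:
  "int_aff a b c d e f (int_aff a' b' c' d' e' f' p) =
   int_aff (a*a' + b*c') (a*b' + b*d') (c*a' + d*c') (c*b' + d*d') (a*e' + b*f' + e) (c*e' + d*f' + f) p"
  by (simp add: int_aff_def algebra_simps)

lemma unimodular_map_comp:
  assumes "unimodular_map g" "unimodular_map h"
  shows "unimodular_map (g \<circ> h)"
proof -
  obtain a b c d e f where g: "\<bar>a * d - b * c\<bar> = 1" "g = int_aff a b c d e f"
    using assms(1) unfolding unimodular_map_def by blast
  obtain a' b' c' d' e' f' where h: "\<bar>a' * d' - b' * c'\<bar> = 1" "h = int_aff a' b' c' d' e' f'"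
    using assms(2) unfolding unimodular_map_def by blast
  have "(a*a' + b*c') * (c*b' + d*d') - (a*b' + b*d') * (c*a' + d*c') = (a*d - b*c) * (a'*d' - b'*c')"
    by (simp add: algebra_simps)
  then have "\<bar>(a*a' + b*c') * (c*b' + d*d') - (a*b' + b*d') * (c*a' + d*c')\<bar> = 1"
    using g(1) h(1) by (simp add: abs_mult)
  moreover have "g \<circ> h = int_aff (a*a' + b*c') (a*b' + b*d') (c*a' + d*c') (c*b' + d*d')
      (a*e' + b*f' + e) (c*e' + d*f' + f)"
    by (simp add: g(2) h(2) fun_eq_iff int_aff_comp)
  ultimately show ?thesis unfolding unimodular_map_def by blast
qed

text \<open>The inverse is the adjugate map scaled by the determinant t, using t * t = 1.\<close>
lemma unimodular_map_inverse:
  fixes h :: "'a::comm_ring_1 \<times> 'a \<Rightarrow> 'a \<times> 'a"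
  assumes "unimodular_map h"
  obtains g where "unimodular_map g" "\<And>p. g (h p) = p"
proof -
  obtain a b c d e f where det: "\<bar>a * d - b * c\<bar> = 1" and h: "h = int_aff a b c d e f"
    using assms unfolding unimodular_map_def by blast
  define t where "t = a * d - b * c"
  have tt: "t * t = 1" using det abs_mult_self_eq[of t] by (simp add: t_def)
  define g :: "'a \<times> 'a \<Rightarrow> 'a \<times> 'a"
    where "g = int_aff (t*d) (-t*b) (-t*c) (t*a) (t*(b*f - d*e)) (t*(c*e - a*f))"
  have "(t*d)*(t*a) - (-t*b)*(-t*c) = (t*t)*t" by (simp add: t_def algebra_simps)
  then have "\<bar>(t*d)*(t*a) - (-t*b)*(-t*c)\<bar> = 1" using tt det by (simp add: t_def)
  then have "unimodular_map g" unfolding g_def unimodular_map_def by blast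
  moreover have "g (h p) = p" for p :: "'a \<times> 'a"
  proof -
    have "g (h p) = int_aff (t*t) 0 0 (t*t) 0 0 p"
      by (simp add: g_def h int_aff_comp t_def algebra_simps)
    then show ?thesis by (simp add: tt int_aff_def)
  qed
  ultimately show thesis by (rule that)
qed

lemma cross2_int_aff:
  "cross2 (int_aff a b c d e f q - int_aff a b c d e f p) (int_aff a b c d e f v - int_aff a b c d e f p) =
   of_int (a * d - b * c) * cross2 (q - p) (v - p)"
  by (simp add: cross2_def int_aff_def algebra_simps)

lemma of_int_pair_int_aff: "of_int_pair (int_aff a b c d e f p) = int_aff a b c d e f (of_int_pair p)"
  by (simp add: of_int_pair_def int_aff_def)

lemma cross2_of_int_pair:
  "cross2 (of_int_pair q - of_int_pair p) (of_int_pair v - of_int_pair p) = of_int (cross2 (q - p) (v - p))"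
  by (simp add: cross2_def of_int_pair_def)

section \<open>Areas in the plane\<close>

definition vec_of_pair :: "real \<times> real \<Rightarrow> real^2" where
  "vec_of_pair p = vector [fst p, snd p]"

definition pair_of_vec :: "real^2 \<Rightarrow> real \<times> real" where
  "pair_of_vec v = (v$1, v$2)"

lemma pair_of_vec_measurable [measurable]: "pair_of_vec \<in> borel_measurable borel"
  unfolding pair_of_vec_def by measurable

lemma lborel_eq_distr_pair_of_vec: "lborel = distr lborel borel pair_of_vec"
proof (rule lborel_eqI)
  fix l u :: "real \<times> real"
  assume le: "\<And>b. b \<in> Basis \<Longrightarrow> l \<bullet> b \<le> u \<bullet> b"
  have l1: "fst l \<le> fst u" and l2: "snd l \<le> snd u"
    using le[of "(1,0)"] le[of "(0,1)"] by (cases l; cases u; auto simp: Basis_prod_def inner_prod_def)+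
  have basis: "(Basis :: (real^2) set) = {axis 1 1, axis 2 1}"
    unfolding Basis_vec_def by (auto, metis exhaust_2)
  have eq: "pair_of_vec -` box l u = box (vector [fst l, snd l]) (vector [fst u, snd u])"
    by (cases l; cases u) (auto simp: pair_of_vec_def mem_box_cart forall_2 mem_box Basis_prod_def inner_prod_def)
  have "emeasure (distr lborel borel pair_of_vec) (box l u) = emeasure lborel (pair_of_vec -` box l u)"
    by (subst emeasure_distr) auto
  also have "\<dots> = ennreal ((fst u - fst l) * (snd u - snd l))"
    unfolding eq using l1 l2
    by (subst emeasure_lborel_box) (auto simp: basis axis_eq_axis inner_axis)
  also have "\<dots> = (\<Prod>b\<in>Basis. (u - l) \<bullet> b)"
    by (cases l; cases u) (simp add: Basis_prod_def inner_prod_def mult.commute)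
  finally show "emeasure (distr lborel borel pair_of_vec) (box l u) = (\<Prod>b\<in>Basis. (u - l) \<bullet> b)" .
qed simp

lemma measure_lborel_vec_of_pair:
  assumes "S \<in> sets borel"
  shows "measure lborel (vec_of_pair ` S) = measure lborel S"
proof -
  have "pair_of_vec -` S = vec_of_pair ` S"
    by (force simp: pair_of_vec_def vec_of_pair_def vec_eq_iff forall_2 image_iff)
  moreover have "measure lborel S = measure lborel (pair_of_vec -` S)"
    using assms by (subst lborel_eq_distr_pair_of_vec) (simp add: measure_distr)
  ultimately show ?thesis by simp
qed

lemma measure_triangle:
  fixes a b c :: "real \<times> real"
  shows "measure lborel (convex hull {a, b, c}) = \<bar>cross2 (b - a) (c - a)\<bar> / 2"
proof -
  have "linear vec_of_pair"
    by (rule linearI) (auto simp: vec_of_pair_def vec_eq_iff forall_2)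
  then have "vec_of_pair ` (convex hull {a, b, c}) = convex hull {vec_of_pair a, vec_of_pair b, vec_of_pair c}"
    by (simp add: convex_hull_linear_image)
  moreover have "convex hull {a, b, c} \<in> sets borel"
    by (intro borel_closed compact_imp_closed finite_imp_compact_convex_hull) auto
  ultimately have "measure lborel (convex hull {a, b, c}) =
      measure lborel (convex hull {vec_of_pair a, vec_of_pair b, vec_of_pair c})"
    using measure_lborel_vec_of_pair by metis
  then show ?thesis
    unfolding content_triangle by (simp add: vec_of_pair_def cross2_def abs_minus_commute algebra_simps)
qed

lemma measure_lborel_negligible_compact:
  assumes "compact S" "negligible S"
  shows "measure lborel S = 0"
  using negligible_imp_measure0[OF assms(2)] assms(1) by (simp add: borel_compact)

text \<open>The triangles abc and abd lie on opposite sides of the line ab, so their areas add up.\<close>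
lemma measure_convex_ge_two_triangles:
  fixes a b c d :: "real \<times> real"
  assumes P: "compact P" "convex P" and abcd: "a \<in> P" "b \<in> P" "c \<in> P" "d \<in> P"
    and sides: "cross2 (b - a) (c - a) \<ge> 0" "cross2 (b - a) (d - a) \<le> 0"
  shows "measure lborel P \<ge> (cross2 (b - a) (c - a) - cross2 (b - a) (d - a)) / 2"
proof (cases "b = a")
  case True
  then show ?thesis by (simp add: cross2_def)
next
  case False
  define n where "n = (- snd (b - a), fst (b - a))"
  have "n \<noteq> 0" using False by (cases a; cases b) (auto simp: n_def zero_prod_def)
  define T1 where "T1 = convex hull {a, b, c}"
  define T2 where "T2 = convex hull {a, b, d}"
  have compact: "compact T1" "compact T2"
    unfolding T1_def T2_def by (auto intro: finite_imp_compact_convex_hull)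
  have n_cross: "n \<bullet> x - n \<bullet> a = cross2 (b - a) (x - a)" for x
    by (simp add: n_def cross2_def inner_prod_def algebra_simps)
  have "T1 \<subseteq> {x. n \<bullet> x \<ge> n \<bullet> a}" unfolding T1_def
    using sides(1) n_cross[of a] n_cross[of b] n_cross[of c]
    by (intro hull_minimal) (simp_all add: convex_halfspace_ge cross2_def)
  moreover have "T2 \<subseteq> {x. n \<bullet> x \<le> n \<bullet> a}" unfolding T2_def
    using sides(2) n_cross[of a] n_cross[of b] n_cross[of d]
    by (intro hull_minimal) (simp_all add: convex_halfspace_le cross2_def)
  ultimately have "T1 \<inter> T2 \<subseteq> {x. n \<bullet> x = n \<bullet> a}" by force
  then have "negligible (T1 \<inter> T2)"
    using negligible_hyperplane[of n "n \<bullet> a"] \<open>n \<noteq> 0\<close> negligible_subset by blast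
  then have "measure lborel (T1 \<inter> T2) = 0"
    using compact by (intro measure_lborel_negligible_compact) auto
  then have "measure lborel (T1 \<union> T2) = measure lborel T1 + measure lborel T2"
    using measure_Un3[OF fmeasurable_compact[OF compact(1)] fmeasurable_compact[OF compact(2)]] by simp
  also have "\<dots> = (cross2 (b - a) (c - a) - cross2 (b - a) (d - a)) / 2"
    using sides by (simp add: T1_def T2_def measure_triangle)
  finally have "measure lborel (T1 \<union> T2) = (cross2 (b - a) (c - a) - cross2 (b - a) (d - a)) / 2" .
  moreover have "T1 \<union> T2 \<subseteq> P"
    unfolding T1_def T2_def using abcd P(2) by (simp add: hull_minimal)
  then have "measure lborel (T1 \<union> T2) \<le> measure lborel P"
    using compact P(1) by (intro measure_mono_fmeasurable) (auto intro: fmeasurable_compact borel_compact)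
  ultimately show ?thesis by simp
qed

lemma int_aff_convex_hull:
  "int_aff a b c d e f ` (convex hull S) = convex hull (int_aff a b c d e f ` (S :: (real \<times> real) set))"
proof -
  define L where
    "L = (\<lambda>p::real \<times> real. (of_int a * fst p + of_int b * snd p, of_int c * fst p + of_int d * snd p))"
  have "linear L" unfolding L_def by (rule linearI) (auto simp: algebra_simps)
  moreover have "int_aff a b c d e f ` X = (+) (of_int e, of_int f) ` (L ` X)" for X
    by (force simp: int_aff_def L_def image_image)
  ultimately show ?thesis
    by (simp add: convex_hull_linear_image convex_hull_translation)
qed

lemma unimodular_map_convex_hull:
  fixes h :: "real \<times> real \<Rightarrow> real \<times> real"
  assumes "unimodular_map h"
  shows "h ` (convex hull S) = convex hull (h ` S)"
  using assms int_aff_convex_hull unfolding unimodular_map_def by blast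

lemma measure_unimodular_image_triangle:
  fixes h :: "real \<times> real \<Rightarrow> real \<times> real"
  assumes "unimodular_map h"
  shows "measure lborel (h ` (convex hull {p, q, r})) = measure lborel (convex hull {p, q, r})"
proof -
  obtain a b c d e f where det: "\<bar>a * d - b * c\<bar> = 1" and h: "h = int_aff a b c d e f"
    using assms unfolding unimodular_map_def by blast
  have "h ` (convex hull {p, q, r}) = convex hull {h p, h q, h r}"
    by (simp add: unimodular_map_convex_hull[OF assms])
  moreover have "\<bar>real_of_int (a * d - b * c)\<bar> = 1" using det by linarith
  ultimately show ?thesis
    by (simp add: measure_triangle h cross2_int_aff abs_mult)
qed

lemma measure_std_triangle:
  assumes "l \<ge> 0"
  shows "measure lborel (convex hull {(0, 0), (l, 0), (0 :: real, 1 :: real)}) = l / 2"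
  using assms by (simp add: measure_triangle cross2_def)

lemma measure_lattice_equivalent_std_triangle:
  assumes "lattice_equivalent P (convex hull {(0, 0), (l, 0), (0, 1)})" "l \<ge> 0"
  shows "measure lborel P = l / 2"
proof -
  obtain \<phi> where \<phi>_unimodular: "unimodular_map \<phi>" and \<phi>: "\<phi> ` P = convex hull {(0, 0), (l, 0), (0, 1)}"
    using assms(1) unfolding lattice_equivalent_def affine_unimodular_iff_unimodular_map by blast
  obtain g where g: "unimodular_map g" "\<And>p. g (\<phi> p) = p"
    using unimodular_map_inverse[OF \<phi>_unimodular] by blast
  have "P = g ` \<phi> ` P" by (simp add: image_image g(2))
  then show ?thesis
    using measure_unimodular_image_triangle[OF g(1)] measure_std_triangle[OF assms(2)] \<phi> by simp
qed

section \<open>Size certificates for sets of lattice points\<close>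

definition in_square :: "int \<Rightarrow> int \<times> int \<Rightarrow> bool" where
  "in_square l p \<longleftrightarrow> 0 \<le> fst p \<and> fst p \<le> l \<and> 0 \<le> snd p \<and> snd p \<le> l"

definition fits_square :: "(int \<times> int) set \<Rightarrow> int \<Rightarrow> bool" where
  "fits_square V l \<longleftrightarrow> (\<exists>h. unimodular_map h \<and> (\<forall>v\<in>V. in_square l (h v)))"

definition has_wide_quadrangle :: "(int \<times> int) set \<Rightarrow> int \<Rightarrow> bool" where
  "has_wide_quadrangle V l \<longleftrightarrow>
     (\<exists>p\<in>V. \<exists>q\<in>V. \<exists>c\<in>V. \<exists>d\<in>V. cross2 (q - p) (c - p) - cross2 (q - p) (d - p) > l)"

definition is_std_triangle_image :: "(int \<times> int) set \<Rightarrow> int \<Rightarrow> bool" where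
  "is_std_triangle_image V l \<longleftrightarrow> 1 \<le> l \<and>
     (\<exists>h. unimodular_map h \<and> h (0, 0) \<in> V \<and> h (l, 0) \<in> V \<and> h (0, 1) \<in> V \<and>
          (\<forall>v\<in>V. v = h (0, 1) \<or> (\<exists>x. 0 \<le> x \<and> x \<le> l \<and> v = h (x, 0))))"

text \<open>A certificate that the convex hull of V has area at least l/2 while fitting into the square
  of side l: either some quadrangle on V has doubled area exceeding l, or V spans a unimodular
  image of conv{(0,0),(l,0),(0,1)}.\<close>
definition size_certificate :: "(int \<times> int) set \<Rightarrow> int \<Rightarrow> bool" where
  "size_certificate V l \<longleftrightarrow>
     0 \<le> l \<and> fits_square V l \<and> (has_wide_quadrangle V l \<or> is_std_triangle_image V l)"

definition lattice_width_ge :: "(int \<times> int) set \<Rightarrow> int \<Rightarrow> bool" where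
  "lattice_width_ge V w \<longleftrightarrow>
     (\<forall>a b. (a, b) \<noteq> (0, 0) \<longrightarrow> (\<exists>u\<in>V. \<exists>v\<in>V. w \<le> a * (fst u - fst v) + b * (snd u - snd v)))"

lemma cross2_unimodular_map:
  fixes h :: "int \<times> int \<Rightarrow> int \<times> int"
  assumes "unimodular_map h"
  obtains \<epsilon> where "\<epsilon> = 1 \<or> \<epsilon> = -1" "\<And>p q v. cross2 (h q - h p) (h v - h p) = \<epsilon> * cross2 (q - p) (v - p)"
proof -
  obtain a b c d e f where det: "\<bar>a * d - b * c\<bar> = 1" and h: "h = int_aff a b c d e f"
    using assms unfolding unimodular_map_def by blast
  show thesis
    by (rule that[of "a * d - b * c"]) (use det in \<open>auto simp: h cross2_int_aff\<close>)
qed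

lemma fits_square_unimodular_image:
  assumes "unimodular_map h" "fits_square (h ` V) l"
  shows "fits_square V l"
proof -
  obtain g where "unimodular_map g" "\<forall>v\<in>h ` V. in_square l (g v)"
    using assms(2) unfolding fits_square_def by blast
  then show ?thesis
    unfolding fits_square_def using unimodular_map_comp[OF _ assms(1)] by fastforce
qed

lemma has_wide_quadrangle_unimodular_image:
  assumes "unimodular_map h" "has_wide_quadrangle (h ` V) l"
  shows "has_wide_quadrangle V l"
proof -
  obtain \<epsilon> where \<epsilon>: "\<epsilon> = 1 \<or> \<epsilon> = -1" "\<And>p q v. cross2 (h q - h p) (h v - h p) = \<epsilon> * cross2 (q - p) (v - p)"
    using cross2_unimodular_map[OF assms(1)] by blast
  obtain p q c d where V: "p \<in> V" "q \<in> V" "c \<in> V" "d \<in> V"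
    and wide: "\<epsilon> * (cross2 (q - p) (c - p) - cross2 (q - p) (d - p)) > l"
    using assms(2) unfolding has_wide_quadrangle_def by (auto simp: \<epsilon>(2) algebra_simps)
  from \<epsilon>(1) show ?thesis
  proof
    assume "\<epsilon> = 1"
    then show ?thesis using V wide unfolding has_wide_quadrangle_def by auto
  next
    assume "\<epsilon> = -1"
    then have "cross2 (q - p) (d - p) - cross2 (q - p) (c - p) > l" using wide by simp
    then show ?thesis using V unfolding has_wide_quadrangle_def by blast
  qed
qed

lemma is_std_triangle_image_unimodular_image:
  assumes "unimodular_map h" "is_std_triangle_image (h ` V) l"
  shows "is_std_triangle_image V l"
proof -
  obtain g where g: "unimodular_map g" "\<And>p. g (h p) = p"
    using unimodular_map_inverse[OF assms(1)] by blast
  obtain k where l: "1 \<le> l" and k: "unimodular_map k"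
    and corners: "k (0, 0) \<in> h ` V" "k (l, 0) \<in> h ` V" "k (0, 1) \<in> h ` V"
    and points: "\<forall>v\<in>h ` V. v = k (0, 1) \<or> (\<exists>x. 0 \<le> x \<and> x \<le> l \<and> v = k (x, 0))"
    using assms(2) unfolding is_std_triangle_image_def by blast
  have "g (k (0, 0)) \<in> V" "g (k (l, 0)) \<in> V" "g (k (0, 1)) \<in> V"
    using corners g(2) by auto
  moreover have "\<forall>v\<in>V. v = g (k (0, 1)) \<or> (\<exists>x. 0 \<le> x \<and> x \<le> l \<and> v = g (k (x, 0)))"
    using points g(2) by (metis image_eqI)
  ultimately show ?thesis
    unfolding is_std_triangle_image_def using l unimodular_map_comp[OF g(1) k] by fastforce
qed

lemma size_certificate_unimodular_image:
  assumes "unimodular_map h" "size_certificate (h ` V) l"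
  shows "size_certificate V l"
  using assms fits_square_unimodular_image has_wide_quadrangle_unimodular_image
    is_std_triangle_image_unimodular_image
  unfolding size_certificate_def by blast

lemma lattice_width_ge_unimodular_image:
  fixes h :: "int \<times> int \<Rightarrow> int \<times> int"
  assumes "unimodular_map h" "lattice_width_ge V w"
  shows "lattice_width_ge (h ` V) w"
  unfolding lattice_width_ge_def
proof (intro allI impI)
  fix a b :: int
  assume ab: "(a, b) \<noteq> (0, 0)"
  obtain A B C D E F where det: "\<bar>A * D - B * C\<bar> = 1" and h: "h = int_aff A B C D E F"
    using assms(1) unfolding unimodular_map_def by blast
  define a' where "a' = a * A + b * C"
  define b' where "b' = a * B + b * D"
  have "(a', b') \<noteq> (0, 0)"
  proof
    assume "(a', b') = (0, 0)"
    moreover have "a * (A * D - B * C) = D * a' - C * b'" "b * (A * D - B * C) = A * b' - B * a'"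
      unfolding a'_def b'_def by (simp_all add: algebra_simps)
    ultimately show False using ab det by auto
  qed
  then obtain u v where "u \<in> V" "v \<in> V" "w \<le> a' * (fst u - fst v) + b' * (snd u - snd v)"
    using assms(2) unfolding lattice_width_ge_def by blast
  moreover have "a * (fst (h u) - fst (h v)) + b * (snd (h u) - snd (h v)) =
      a' * (fst u - fst v) + b' * (snd u - snd v)"
    unfolding a'_def b'_def h by (simp add: int_aff_int algebra_simps)
  ultimately show "\<exists>u\<in>h ` V. \<exists>v\<in>h ` V. w \<le> a * (fst u - fst v) + b * (snd u - snd v)"
    by force
qed

section \<open>Lattice width and the strip normal form\<close>

lemma not_lattice_width_ge_on_line:
  assumes "(\<alpha>, \<beta>) \<noteq> (0, 0)" "0 < w" and line: "\<And>v. v \<in> V \<Longrightarrow> \<alpha> * fst v + \<beta> * snd v = k"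
  shows "\<not> lattice_width_ge V w"
proof
  assume "lattice_width_ge V w"
  then obtain u v where "u \<in> V" "v \<in> V" "w \<le> \<alpha> * (fst u - fst v) + \<beta> * (snd u - snd v)"
    using assms(1) unfolding lattice_width_ge_def by blast
  moreover have "\<alpha> * (fst u - fst v) + \<beta> * (snd u - snd v) =
      (\<alpha> * fst u + \<beta> * snd u) - (\<alpha> * fst v + \<beta> * snd v)"
    by (simp add: algebra_simps)
  ultimately show False using line assms(2) by simp
qed

lemma finite_obtains_max:
  fixes F :: "'a \<Rightarrow> 'b::linorder"
  assumes "finite V" "V \<noteq> {}"
  obtains u where "u \<in> V" "\<And>v. v \<in> V \<Longrightarrow> F v \<le> F u"
proof -
  have "Max (F ` V) \<in> F ` V" using assms by simp
  then obtain u where "u \<in> V" "F u = Max (F ` V)" by (metis imageE)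
  then show thesis using that assms by simp
qed

lemma finite_obtains_min:
  fixes F :: "'a \<Rightarrow> 'b::linorder"
  assumes "finite V" "V \<noteq> {}"
  obtains u where "u \<in> V" "\<And>v. v \<in> V \<Longrightarrow> F u \<le> F v"
proof -
  have "Min (F ` V) \<in> F ` V" using assms by simp
  then obtain u where "u \<in> V" "F u = Min (F ` V)" by (metis imageE)
  then show thesis using that assms by simp
qed

lemma lattice_width_direction_coprime:
  assumes width: "lattice_width_ge V w" and "1 \<le> w" and ab: "(a, b) \<noteq> (0, 0)"
    and bound: "\<And>u v. u \<in> V \<Longrightarrow> v \<in> V \<Longrightarrow> a * (fst u - fst v) + b * (snd u - snd v) \<le> w"
  shows "coprime a b"
proof (rule ccontr)
  assume "\<not> coprime a b"
  define g where "g = gcd a b"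
  have "g \<ge> 0" "g \<noteq> 0" "g \<noteq> 1"
    using ab \<open>\<not> coprime a b\<close> by (auto simp: g_def coprime_iff_gcd_eq_1)
  then have "g \<ge> 2" by linarith
  obtain a1 b1 where a1: "a = g * a1" and b1: "b = g * b1"
    unfolding g_def by (meson dvdE gcd_dvd1 gcd_dvd2)
  then have "(a1, b1) \<noteq> (0, 0)" using ab by auto
  then obtain u v where uv: "u \<in> V" "v \<in> V" and wide: "w \<le> a1 * (fst u - fst v) + b1 * (snd u - snd v)"
    using width unfolding lattice_width_ge_def by blast
  define x where "x = a1 * (fst u - fst v) + b1 * (snd u - snd v)"
  have "w \<le> x" using wide by (simp add: x_def)
  have "g * x \<le> w" using bound[OF uv] unfolding a1 b1 x_def by (simp add: algebra_simps)
  moreover have "2 * x \<le> g * x" using \<open>g \<ge> 2\<close> \<open>w \<le> x\<close> \<open>1 \<le> w\<close> by (intro mult_right_mono) auto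
  ultimately show False using \<open>w \<le> x\<close> \<open>1 \<le> w\<close> by linarith
qed

lemma lattice_width_attained:
  assumes "finite V" "V \<noteq> {}"
    and not_collinear: "\<And>a b. (a, b) \<noteq> (0, 0) \<Longrightarrow> \<exists>u\<in>V. \<exists>v\<in>V. a * (fst u - fst v) + b * (snd u - snd v) \<noteq> 0"
  obtains w a b where "1 \<le> w" "coprime a b" "lattice_width_ge V w"
    "\<And>u v. u \<in> V \<Longrightarrow> v \<in> V \<Longrightarrow> a * (fst u - fst v) + b * (snd u - snd v) \<le> w"
proof -
  define S where "S = {n::nat. \<exists>a b. (a, b) \<noteq> (0::int, 0::int) \<and>
      (\<forall>u\<in>V. \<forall>v\<in>V. a * (fst u - fst v) + b * (snd u - snd v) \<le> int n)}"
  obtain r where r: "r \<in> V" "\<And>v. v \<in> V \<Longrightarrow> fst v \<le> fst r"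
    using finite_obtains_max[OF assms(1,2), of fst] by blast
  obtain s where s: "s \<in> V" "\<And>v. v \<in> V \<Longrightarrow> fst s \<le> fst v"
    using finite_obtains_min[OF assms(1,2), of fst] by blast
  have "\<forall>u\<in>V. \<forall>v\<in>V. 1 * (fst u - fst v) + 0 * (snd u - snd v) \<le> int (nat (fst r - fst s))"
    using r(2) s(2) s(2)[OF r(1)] by (simp add: diff_mono)
  then have "nat (fst r - fst s) \<in> S"
    unfolding S_def by (intro CollectI exI[of _ "1::int"] exI[of _ "0::int"]) simp
  define w where "w = (LEAST n. n \<in> S)"
  have "w \<in> S" unfolding w_def by (rule LeastI) fact
  then obtain a b where ab: "(a, b) \<noteq> (0, 0)"
    and bound: "\<And>u v. u \<in> V \<Longrightarrow> v \<in> V \<Longrightarrow> a * (fst u - fst v) + b * (snd u - snd v) \<le> int w"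
    unfolding S_def by blast
  have width: "lattice_width_ge V (int w)"
    unfolding lattice_width_ge_def
  proof (intro allI impI, rule ccontr)
    fix a' b' :: int
    assume ab': "(a', b') \<noteq> (0, 0)"
      and "\<not> (\<exists>u\<in>V. \<exists>v\<in>V. int w \<le> a' * (fst u - fst v) + b' * (snd u - snd v))"
    then have less: "\<forall>u\<in>V. \<forall>v\<in>V. a' * (fst u - fst v) + b' * (snd u - snd v) < int w"
      by (simp add: not_le)
    obtain z where "z \<in> V" using \<open>V \<noteq> {}\<close> by blast
    then have "0 < w" using less by fastforce
    then have "\<forall>u\<in>V. \<forall>v\<in>V. a' * (fst u - fst v) + b' * (snd u - snd v) \<le> int (w - 1)"
      using less by (auto simp: of_nat_diff)
    then have "w - 1 \<in> S"
      unfolding S_def using ab' by blast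
    then show False using Least_le[of "\<lambda>n. n \<in> S" "w - 1"] \<open>0 < w\<close> unfolding w_def by simp
  qed
  have "1 \<le> int w"
  proof -
    obtain u v where uv: "u \<in> V" "v \<in> V" "a * (fst u - fst v) + b * (snd u - snd v) \<noteq> 0"
      using not_collinear[OF ab] by blast
    then show ?thesis using bound[OF uv(1,2)] bound[OF uv(2,1)] by (simp add: algebra_simps)
  qed
  then show thesis
    using that lattice_width_direction_coprime[OF width _ ab] bound width by blast
qed

text \<open>Completing a primitive row (a, b) to a unimodular matrix uses Bezout's identity.\<close>
lemma coprime_imp_unimodular_map_snd:
  assumes "coprime a b"
  obtains h :: "int \<times> int \<Rightarrow> int \<times> int"
    where "unimodular_map h" "\<And>v. snd (h v) = a * fst v + b * snd v + m"
proof -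
  obtain x y where "x * a + y * b = 1" using bezout_int[of a b] assms by auto
  then have "unimodular_map (int_aff y (- x) a b 0 m)"
    unfolding unimodular_map_def
    by (intro exI[of _ y] exI[of _ "- x"] exI[of _ a] exI[of _ b] exI[of _ 0] exI[of _ m]) (simp add: algebra_simps)
  then show thesis by (rule that) (simp add: int_aff_int)
qed

lemma unimodular_map_shear: "unimodular_map (\<lambda>v :: int \<times> int. (fst v + k * snd v, snd v))"
proof -
  have "(\<lambda>v :: int \<times> int. (fst v + k * snd v, snd v)) = int_aff 1 k 0 1 0 0"
    by (simp add: fun_eq_iff int_aff_int)
  then show ?thesis by (simp add: unimodular_map_int_aff)
qed

lemma exists_shear_centered:
  fixes s w :: int
  assumes "1 \<le> w"
  obtains k where "\<bar>2 * (s + k * w)\<bar> \<le> w"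
proof -
  define t where "t = 2 * s + w"
  have "2 * (s - (t div (2 * w)) * w) = t mod (2 * w) - w"
    using div_mult_mod_eq[of t "2 * w"] unfolding t_def by (simp add: algebra_simps)
  moreover have "0 \<le> t mod (2 * w)" "t mod (2 * w) < 2 * w" using assms by auto
  ultimately show thesis using that[of "- (t div (2 * w))"] by simp
qed

lemma strip_normal_form:
  assumes "finite V" "V \<noteq> {}"
    and "\<And>a b. (a, b) \<noteq> (0, 0) \<Longrightarrow> \<exists>u\<in>V. \<exists>v\<in>V. a * (fst u - fst v) + b * (snd u - snd v) \<noteq> 0"
  obtains h w p q where "unimodular_map h" "1 \<le> w" "lattice_width_ge (h ` V) w"
    "\<And>v. v \<in> h ` V \<Longrightarrow> 0 \<le> snd v \<and> snd v \<le> w"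
    "p \<in> h ` V" "snd p = 0" "q \<in> h ` V" "snd q = w" "\<bar>2 * (fst q - fst p)\<bar> \<le> w"
proof -
  obtain w a b where w: "1 \<le> w" and ab: "coprime a b" and width: "lattice_width_ge V w"
    and bound: "\<And>u v. u \<in> V \<Longrightarrow> v \<in> V \<Longrightarrow> a * (fst u - fst v) + b * (snd u - snd v) \<le> w"
    using lattice_width_attained[OF assms] by blast
  define F where "F v = a * fst v + b * snd v" for v :: "int \<times> int"
  obtain pm where pm: "pm \<in> V" "\<And>v. v \<in> V \<Longrightarrow> F pm \<le> F v"
    using finite_obtains_min[OF assms(1,2), of F] by blast
  obtain pM where pM: "pM \<in> V" "\<And>v. v \<in> V \<Longrightarrow> F v \<le> F pM"
    using finite_obtains_max[OF assms(1,2), of F] by blast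
  have F_diff: "F u - F v = a * (fst u - fst v) + b * (snd u - snd v)" for u v
    by (simp add: F_def algebra_simps)
  have F_range: "F pM - F pm = w"
  proof -
    have "(a, b) \<noteq> (0, 0)" using ab by auto
    then obtain u v where "u \<in> V" "v \<in> V" "w \<le> F u - F v"
      using width unfolding lattice_width_ge_def F_diff by blast
    then show ?thesis using pm pM bound[OF pM(1) pm(1)] unfolding F_diff[symmetric] by fastforce
  qed
  obtain h1 where h1: "unimodular_map h1" "\<And>v. snd (h1 v) = a * fst v + b * snd v + (- F pm)"
    using coprime_imp_unimodular_map_snd[OF ab] by blast
  obtain k where k: "\<bar>2 * (fst (h1 pM) - fst (h1 pm) + k * w)\<bar> \<le> w"
    using exists_shear_centered[OF w] by blast
  define h where "h = (\<lambda>v. (fst v + k * snd v, snd v)) \<circ> h1"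
  have snd_h: "snd (h v) = F v - F pm" for v
    by (simp add: h_def h1(2) F_def)
  show thesis
  proof (rule that[of h w "h pm" "h pM"])
    show "unimodular_map h"
      unfolding h_def by (rule unimodular_map_comp[OF unimodular_map_shear h1(1)])
    then show "lattice_width_ge (h ` V) w" using width by (rule lattice_width_ge_unimodular_image)
    show "0 \<le> snd v \<and> snd v \<le> w" if "v \<in> h ` V" for v
      using that pm(2) pM(2) F_range by (auto simp: snd_h)
    show "\<bar>2 * (fst (h pM) - fst (h pm))\<bar> \<le> w"
      using k F_range by (simp add: h_def h1(2) F_def algebra_simps)
  qed (use w pm(1) pM(1) F_range in \<open>simp_all add: snd_h\<close>)
qed

section \<open>Certificates for sets in a strip\<close>

lemma fits_square_box:
  assumes "\<And>v. v \<in> V \<Longrightarrow> t \<le> fst v \<and> fst v \<le> t + X \<and> 0 \<le> snd v \<and> snd v \<le> X"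
  shows "fits_square V X"
  unfolding fits_square_def
proof (intro exI conjI ballI)
  show "unimodular_map (int_aff 1 0 0 1 (- t) 0 :: int \<times> int \<Rightarrow> _)"
    by (rule unimodular_map_int_aff) simp
  show "in_square X (int_aff 1 0 0 1 (- t) 0 v)" if "v \<in> V" for v
    using assms[OF that] by (simp add: in_square_def int_aff_int)
qed

lemma size_certificate_apex:
  assumes "a < b" "(a, 0) \<in> V" "(b, 0) \<in> V" "(c, 1) \<in> V"
    and points: "\<And>v. v \<in> V \<Longrightarrow> v = (c, 1) \<or> (snd v = 0 \<and> a \<le> fst v \<and> fst v \<le> b)"
  shows "size_certificate V (b - a)"
proof -
  have "fits_square V (b - a)"
    unfolding fits_square_def
  proof (intro exI conjI ballI)
    show "unimodular_map (int_aff 1 (a - c) 0 1 (- a) 0 :: int \<times> int \<Rightarrow> _)"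
      by (rule unimodular_map_int_aff) simp
    show "in_square (b - a) (int_aff 1 (a - c) 0 1 (- a) 0 v)" if "v \<in> V" for v
      using points[OF that] \<open>a < b\<close> by (auto simp: in_square_def int_aff_int)
  qed
  moreover have "is_std_triangle_image V (b - a)"
    unfolding is_std_triangle_image_def
  proof (intro conjI exI)
    let ?h = "int_aff 1 (c - a) 0 1 a 0 :: int \<times> int \<Rightarrow> _"
    show "unimodular_map ?h" by (rule unimodular_map_int_aff) simp
    have h: "?h (x, y) = (x + (c - a) * y + a, y)" for x y by (simp add: int_aff_int)
    show "?h (0, 0) \<in> V" "?h (b - a, 0) \<in> V" "?h (0, 1) \<in> V" using assms(2-4) by (simp_all add: h)
    show "\<forall>v\<in>V. v = ?h (0, 1) \<or> (\<exists>x. 0 \<le> x \<and> x \<le> b - a \<and> v = ?h (x, 0))"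
    proof
      fix v assume "v \<in> V"
      then have "v = ?h (0, 1) \<or> (0 \<le> fst v - a \<and> fst v - a \<le> b - a \<and> v = ?h (fst v - a, 0))"
        using points[OF \<open>v \<in> V\<close>] by (cases v) (auto simp: h)
      then show "v = ?h (0, 1) \<or> (\<exists>x. 0 \<le> x \<and> x \<le> b - a \<and> v = ?h (x, 0))" by blast
    qed
  qed (use \<open>a < b\<close> in simp)
  ultimately show ?thesis using \<open>a < b\<close> unfolding size_certificate_def by simp
qed

lemma size_certificate_two_rows_quadrangle:
  assumes "a < b" "c < d" "(a, 0) \<in> V" "(b, 0) \<in> V" "(c, 1) \<in> V" "(d, 1) \<in> V"
    and rows: "\<And>v. v \<in> V \<Longrightarrow>
      (snd v = 0 \<and> a \<le> fst v \<and> fst v \<le> b) \<or> (snd v = 1 \<and> c \<le> fst v \<and> fst v \<le> d)"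
  shows "size_certificate V (max (b - a) (d - c))"
proof -
  have "fits_square V (max (b - a) (d - c))"
    unfolding fits_square_def
  proof (intro exI conjI ballI)
    show "unimodular_map (int_aff 1 (a - c) 0 1 (- a) 0 :: int \<times> int \<Rightarrow> _)"
      by (rule unimodular_map_int_aff) simp
    show "in_square (max (b - a) (d - c)) (int_aff 1 (a - c) 0 1 (- a) 0 v)" if "v \<in> V" for v
      using rows[OF that] assms(1,2) by (auto simp: in_square_def int_aff_int)
  qed
  moreover have "cross2 ((c, 1) - (b, 0)) ((a, 0) - (b, 0)) - cross2 ((c, 1) - (b, 0)) ((d, 1) - (b, 0))
      > max (b - a) (d - c)"
    using assms(1,2) by (simp add: cross2_def)
  then have "has_wide_quadrangle V (max (b - a) (d - c))"
    unfolding has_wide_quadrangle_def using assms(3-6) by blast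
  ultimately show ?thesis using assms(1) unfolding size_certificate_def by simp
qed

lemma size_certificate_two_rows:
  assumes "finite V" "lattice_width_ge V 1" and rows: "\<And>v. v \<in> V \<Longrightarrow> snd v = 0 \<or> snd v = 1"
    and "p \<in> V" "snd p = 0" "q \<in> V" "snd q = 1"
  obtains l where "size_certificate V l"
proof -
  define V0 where "V0 = {v \<in> V. snd v = 0}"
  define V1 where "V1 = {v \<in> V. snd v = 1}"
  have "finite V0" "V0 \<noteq> {}" "finite V1" "V1 \<noteq> {}"
    using assms(1,4-7) unfolding V0_def V1_def by fastforce+
  then obtain A B C D where A: "A \<in> V0" "\<And>v. v \<in> V0 \<Longrightarrow> fst A \<le> fst v"
    and B: "B \<in> V0" "\<And>v. v \<in> V0 \<Longrightarrow> fst v \<le> fst B"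
    and C: "C \<in> V1" "\<And>v. v \<in> V1 \<Longrightarrow> fst C \<le> fst v"
    and D: "D \<in> V1" "\<And>v. v \<in> V1 \<Longrightarrow> fst v \<le> fst D"
    using finite_obtains_min[of V0 fst] finite_obtains_max[of V0 fst]
      finite_obtains_min[of V1 fst] finite_obtains_max[of V1 fst] by metis
  define a b c d where "a = fst A" "b = fst B" "c = fst C" "d = fst D"
  have corners: "(a, 0) \<in> V" "(b, 0) \<in> V" "(c, 1) \<in> V" "(d, 1) \<in> V"
    using A(1) B(1) C(1) D(1) unfolding a_b_c_d_def V0_def V1_def
    by (metis (mono_tags, lifting) mem_Collect_eq prod.collapse)+
  have points: "(snd v = 0 \<and> a \<le> fst v \<and> fst v \<le> b) \<or> (snd v = 1 \<and> c \<le> fst v \<and> fst v \<le> d)"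
    if "v \<in> V" for v
    using rows[OF that] that A(2)[of v] B(2)[of v] C(2)[of v] D(2)[of v]
    unfolding a_b_c_d_def V0_def V1_def by auto
  then have "a \<le> b" "c \<le> d" using corners by fastforce+
  then consider "c = d" | "a = b" "c < d" | "a < b" "c < d" by linarith
  then show thesis
  proof cases
    case 1
    have "a \<noteq> b"
    proof
      assume "a = b"
      then have "1 * fst v + (a - c) * snd v = a" if "v \<in> V" for v
        using points[OF that] 1 by auto
      then show False
        using not_lattice_width_ge_on_line[of 1 "a - c" 1 V a] \<open>lattice_width_ge V 1\<close> by simp
    qed
    then show thesis
      using that size_certificate_apex[of a b V c] \<open>a \<le> b\<close> corners points 1 by fastforce
  next
    case 2
    define r where "r = (int_aff 1 0 0 (- 1) 0 1 :: int \<times> int \<Rightarrow> _)"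
    have r: "r (x, y) = (x, 1 - y)" for x y by (simp add: r_def int_aff_int)
    have "unimodular_map r" unfolding r_def by (rule unimodular_map_int_aff) simp
    moreover have "size_certificate (r ` V) (d - c)"
    proof (rule size_certificate_apex)
      show "(c, 0) \<in> r ` V" "(d, 0) \<in> r ` V" "(a, 1) \<in> r ` V"
        using corners r[of c 1] r[of d 1] r[of a 0] by (metis diff_self diff_zero image_eqI)+
      show "v = (a, 1) \<or> (snd v = 0 \<and> c \<le> fst v \<and> fst v \<le> d)" if "v \<in> r ` V" for v
        using that points 2 by (force simp: r)
    qed (use 2 in simp)
    ultimately show thesis using that size_certificate_unimodular_image by blast
  next
    case 3
    then show thesis using that size_certificate_two_rows_quadrangle corners points by blast
  qed
qed

lemma wide_strip_arith:
  fixes w X G :: int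
  assumes "2 \<le> w" "w \<le> X" "2 * w * X \<le> 2 * G + w * w" "3 \<le> w \<or> 3 \<le> G"
  shows "X < G"
proof (rule ccontr)
  assume "\<not> X < G"
  then have "2 * X * (w - 1) \<le> w * w" using assms(3) by (simp add: algebra_simps)
  moreover have "2 * w * (w - 1) \<le> 2 * X * (w - 1)" using assms(1,2) by (intro mult_right_mono) auto
  ultimately have "w * w \<le> 2 * w" by (simp add: algebra_simps)
  moreover have "3 \<le> w \<longrightarrow> 3 * w \<le> w * w" by (simp add: mult_right_mono)
  ultimately show False using assms \<open>\<not> X < G\<close> by auto
qed

text \<open>The quadrangle lies over the diagonal r - t; its doubled area is measured by the width
  in the transversal direction (1, - s).\<close>
lemma has_wide_quadrangle_width_two:
  assumes width: "lattice_width_ge V 2" and "r \<in> V" "t \<in> V"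
    and diag: "r - t = (2, 2 * s)" "s = 1 \<or> s = -1"
  shows "has_wide_quadrangle V 2"
proof -
  have "(1 :: int, - s) \<noteq> (0, 0)" by simp
  then obtain u v where uv: "u \<in> V" "v \<in> V" and wide: "2 \<le> 1 * (fst u - fst v) + (- s) * (snd u - snd v)"
    using width unfolding lattice_width_ge_def by blast
  have "cross2 (r - t) (v - t) - cross2 (r - t) (u - t) = 2 * s * ((fst u - fst v) - s * (snd u - snd v))"
    using diag by (auto simp: cross2_def algebra_simps)
  with diag(2) wide have "cross2 (r - t) (v - t) - cross2 (r - t) (u - t) > 2 \<or>
      cross2 (r - t) (u - t) - cross2 (r - t) (v - t) > 2"
    by auto
  then show ?thesis
    unfolding has_wide_quadrangle_def using uv \<open>r \<in> V\<close> \<open>t \<in> V\<close> by blast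
qed

lemma size_certificate_wide_strip:
  assumes "finite V" "2 \<le> w" "lattice_width_ge V w" and strip: "\<And>v. v \<in> V \<Longrightarrow> 0 \<le> snd v \<and> snd v \<le> w"
    and p: "p \<in> V" "snd p = 0" and q: "q \<in> V" "snd q = w" and centered: "\<bar>2 * (fst q - fst p)\<bar> \<le> w"
  obtains l where "size_certificate V l"
proof -
  have "V \<noteq> {}" using p by blast
  define s where "s = fst q - fst p"
  define g where "g v = w * fst v - s * snd v" for v :: "int \<times> int"
  obtain c where c: "c \<in> V" "\<And>v. v \<in> V \<Longrightarrow> g v \<le> g c"
    using finite_obtains_max[OF assms(1) \<open>V \<noteq> {}\<close>, of g] by blast
  obtain d where d: "d \<in> V" "\<And>v. v \<in> V \<Longrightarrow> g d \<le> g v"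
    using finite_obtains_min[OF assms(1) \<open>V \<noteq> {}\<close>, of g] by blast
  obtain r where r: "r \<in> V" "\<And>v. v \<in> V \<Longrightarrow> fst v \<le> fst r"
    using finite_obtains_max[OF assms(1) \<open>V \<noteq> {}\<close>, of fst] by blast
  obtain t where t: "t \<in> V" "\<And>v. v \<in> V \<Longrightarrow> fst t \<le> fst v"
    using finite_obtains_min[OF assms(1) \<open>V \<noteq> {}\<close>, of fst] by blast
  have "2 * \<bar>s\<bar> \<le> w" using centered unfolding s_def[symmetric] by (simp add: abs_mult)
  define G where "G = g c - g d"
  define X where "X = fst r - fst t"
  have "w \<le> X"
  proof -
    have "(1 :: int, 0 :: int) \<noteq> (0, 0)" by simp
    then obtain u v where "u \<in> V" "v \<in> V" "w \<le> 1 * (fst u - fst v) + 0 * (snd u - snd v)"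
      using \<open>lattice_width_ge V w\<close> unfolding lattice_width_ge_def by blast
    then show ?thesis using r(2)[of u] t(2)[of v] unfolding X_def by simp
  qed
  have fits: "fits_square V X"
    using r(2) t(2) strip \<open>w \<le> X\<close> by (intro fits_square_box[of V "fst t"]) (force simp: X_def)
  have "g r - g t \<le> G" using c(2)[OF r(1)] d(2)[OF t(1)] unfolding G_def by linarith
  have "\<bar>snd r - snd t\<bar> \<le> w" using strip[OF r(1)] strip[OF t(1)] by linarith
  have X_decomp: "w * X = (g r - g t) + s * (snd r - snd t)"
    unfolding X_def g_def by (simp add: algebra_simps)
  have "s * (snd r - snd t) \<le> \<bar>s\<bar> * w"
    using mult_left_mono[OF \<open>\<bar>snd r - snd t\<bar> \<le> w\<close>, of "\<bar>s\<bar>"] abs_ge_self[of "s * (snd r - snd t)"]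
    by (simp add: abs_mult)
  moreover have "2 * \<bar>s\<bar> * w \<le> w * w"
    using \<open>2 * \<bar>s\<bar> \<le> w\<close> \<open>2 \<le> w\<close> by (intro mult_right_mono) auto
  ultimately have "2 * w * X \<le> 2 * G + w * w"
    using X_decomp \<open>g r - g t \<le> G\<close> by (simp add: algebra_simps)
  then have "X < G \<or> (w = 2 \<and> G \<le> 2)"
    using wide_strip_arith[OF \<open>2 \<le> w\<close> \<open>w \<le> X\<close>] \<open>2 \<le> w\<close>
    by (cases "3 \<le> w \<or> 3 \<le> G") auto
  then consider "X < G" | "w = 2" "G \<le> 2" by blast
  then have "has_wide_quadrangle V X"
  proof cases
    case 1
    have "cross2 (q - p) (v - p) = w * fst p - g v" for v
      using p(2) q(2) by (simp add: cross2_def g_def s_def algebra_simps)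
    then have "cross2 (q - p) (d - p) - cross2 (q - p) (c - p) > X"
      using 1 unfolding G_def by simp
    then show ?thesis unfolding has_wide_quadrangle_def using p(1) q(1) c(1) d(1) by blast
  next
    case 2
    have "\<bar>s\<bar> \<le> 1" using \<open>2 * \<bar>s\<bar> \<le> w\<close> 2 by simp
    moreover have "s * (snd r - snd t) \<le> 2"
      using \<open>s * (snd r - snd t) \<le> \<bar>s\<bar> * w\<close> \<open>\<bar>s\<bar> \<le> 1\<close> 2 by simp
    moreover have "2 * X \<le> 2 + s * (snd r - snd t)" using X_decomp \<open>g r - g t \<le> G\<close> 2 by simp
    ultimately have "X = 2" "s * (snd r - snd t) = 2" using \<open>w \<le> X\<close> 2 by auto
    moreover have "s = -1 \<or> s = 0 \<or> s = 1" using \<open>\<bar>s\<bar> \<le> 1\<close> by auto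
    ultimately have "r - t = (2, 2 * s)" "s = 1 \<or> s = -1"
      unfolding X_def by (auto simp: prod_eq_iff)
    then show ?thesis
      using has_wide_quadrangle_width_two[OF _ r(1) t(1)] \<open>lattice_width_ge V w\<close> 2 \<open>X = 2\<close> by blast
  qed
  then show thesis
    using that[of X] fits \<open>w \<le> X\<close> \<open>2 \<le> w\<close> unfolding size_certificate_def by simp
qed

lemma size_certificate_exists:
  assumes "finite V" "V \<noteq> {}"
    and "\<And>a b. (a, b) \<noteq> (0, 0) \<Longrightarrow> \<exists>u\<in>V. \<exists>v\<in>V. a * (fst u - fst v) + b * (snd u - snd v) \<noteq> 0"
  obtains l where "size_certificate V l"
proof -
  obtain h w p q where h: "unimodular_map h" and "1 \<le> w" and width: "lattice_width_ge (h ` V) w"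
    and strip: "\<And>v. v \<in> h ` V \<Longrightarrow> 0 \<le> snd v \<and> snd v \<le> w"
    and pq: "p \<in> h ` V" "snd p = 0" "q \<in> h ` V" "snd q = w" "\<bar>2 * (fst q - fst p)\<bar> \<le> w"
    using strip_normal_form[OF assms] by blast
  have "finite (h ` V)" using assms(1) by simp
  have "\<exists>l. size_certificate (h ` V) l"
  proof (cases "w = 1")
    case True
    then have "\<And>v. v \<in> h ` V \<Longrightarrow> snd v = 0 \<or> snd v = 1" using strip by fastforce
    moreover have "lattice_width_ge (h ` V) 1" "snd q = 1" using True width pq(4) by simp_all
    ultimately show ?thesis
      using size_certificate_two_rows[OF \<open>finite (h ` V)\<close>] pq(1-3) by blast
  next
    case False
    then have "2 \<le> w" using \<open>1 \<le> w\<close> by simp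
    then show ?thesis
      using size_certificate_wide_strip[OF \<open>finite (h ` V)\<close> _ width strip pq] by blast
  qed
  then show thesis using that size_certificate_unimodular_image[OF h] by blast
qed

section \<open>Lattice polygons\<close>

lemma lattice_polygon_obtains_int_vertices:
  assumes "lattice_polygon P"
  obtains V where "finite V" "P = convex hull (of_int_pair ` V)"
proof -
  obtain V0 where "finite V0" "\<forall>v\<in>V0. lattice_point v" and P: "P = convex hull V0"
    using assms unfolding lattice_polygon_def by blast
  moreover have "of_int_pair (\<lfloor>fst v\<rfloor>, \<lfloor>snd v\<rfloor>) = v" if "lattice_point v" for v
    using that unfolding lattice_point_def of_int_pair_def by (auto elim!: Ints_cases)
  ultimately have "of_int_pair ` (\<lambda>v. (\<lfloor>fst v\<rfloor>, \<lfloor>snd v\<rfloor>)) ` V0 = V0"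
    by (simp add: image_image)
  then show thesis using that[of "(\<lambda>v. (\<lfloor>fst v\<rfloor>, \<lfloor>snd v\<rfloor>)) ` V0"] \<open>finite V0\<close> P by simp
qed

lemma measure_convex_hull_collinear:
  assumes "finite V" "(a, b) \<noteq> (0, 0)"
    and line: "\<And>u v. u \<in> V \<Longrightarrow> v \<in> V \<Longrightarrow> a * (fst u - fst v) + b * (snd u - snd v) = 0"
  shows "measure lborel (convex hull (of_int_pair ` V :: (real \<times> real) set)) = 0"
proof (cases "V = {}")
  case False
  then obtain z where "z \<in> V" by blast
  define n :: "real \<times> real" where "n = (of_int a, of_int b)"
  have "n \<noteq> 0" using assms(2) by (simp add: n_def zero_prod_def)
  have "n \<bullet> of_int_pair v = n \<bullet> of_int_pair z" if "v \<in> V" for v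
  proof -
    have "real_of_int (a * (fst v - fst z) + b * (snd v - snd z)) = 0"
      using line[OF that \<open>z \<in> V\<close>] by simp
    then show ?thesis by (simp add: n_def of_int_pair_def inner_prod_def algebra_simps)
  qed
  then have "convex hull (of_int_pair ` V) \<subseteq> {x. n \<bullet> x = n \<bullet> of_int_pair z}"
    by (intro hull_minimal) (auto simp: convex_hyperplane)
  then have "negligible (convex hull (of_int_pair ` V :: (real \<times> real) set))"
    using negligible_hyperplane[of n "n \<bullet> of_int_pair z"] \<open>n \<noteq> 0\<close> negligible_subset by blast
  then show ?thesis
    using assms(1) by (intro measure_lborel_negligible_compact finite_imp_compact_convex_hull) auto
qed simp

lemma fits_square_imp_scaled_square:
  assumes "fits_square V l"
  obtains \<phi> where "affine_unimodular \<phi>" "\<phi> ` (convex hull (of_int_pair ` V)) \<subseteq> scaled_square (of_int l)"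
proof -
  obtain a b c d e f where det: "\<bar>a * d - b * c\<bar> = 1" and V: "\<forall>v\<in>V. in_square l (int_aff a b c d e f v)"
    using assms unfolding fits_square_def unimodular_map_def by blast
  let ?\<phi> = "int_aff a b c d e f :: real \<times> real \<Rightarrow> _"
  have "convex (scaled_square (of_int l))"
  proof -
    have "scaled_square (of_int l) = {0 .. of_int l} \<times> {0 .. of_int l}"
      by (auto simp: scaled_square_def)
    then show ?thesis by (simp add: convex_Times)
  qed
  moreover have "?\<phi> ` of_int_pair ` V \<subseteq> scaled_square (of_int l)"
  proof (clarsimp simp: of_int_pair_int_aff[symmetric])
    fix v assume "v \<in> V"
    then show "of_int_pair (int_aff a b c d e f v) \<in> scaled_square (real_of_int l)"
      using V by (simp add: in_square_def of_int_pair_def scaled_square_def)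
  qed
  ultimately have "?\<phi> ` (convex hull (of_int_pair ` V)) \<subseteq> scaled_square (of_int l)"
    by (simp add: int_aff_convex_hull hull_minimal)
  moreover have "affine_unimodular ?\<phi>"
    using det by (simp add: affine_unimodular_iff_unimodular_map unimodular_map_int_aff)
  ultimately show thesis by (rule that[rotated])
qed

lemma has_wide_quadrangle_imp_measure:
  assumes "finite V" "has_wide_quadrangle V l"
  shows "measure lborel (convex hull (of_int_pair ` V :: (real \<times> real) set)) > of_int l / 2"
proof -
  obtain p q c d where pq: "p \<in> V" "q \<in> V" and cd: "c \<in> V" "d \<in> V"
    and wide: "cross2 (q - p) (c - p) - cross2 (q - p) (d - p) > l"
    using assms(2) unfolding has_wide_quadrangle_def by blast
  define D where "D v = cross2 (q - p) (v - p)" for v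
  obtain c' where c': "c' \<in> V" "\<And>v. v \<in> V \<Longrightarrow> D v \<le> D c'"
    using finite_obtains_max[OF assms(1), of D] pq(1) by blast
  obtain d' where d': "d' \<in> V" "\<And>v. v \<in> V \<Longrightarrow> D d' \<le> D v"
    using finite_obtains_min[OF assms(1), of D] pq(1) by blast
  have "D p = 0" by (simp add: D_def cross2_def)
  then have sides: "D c' \<ge> 0" "D d' \<le> 0" "D c' - D d' > l"
    using c'(2)[OF pq(1)] d'(2)[OF pq(1)] c'(2)[OF cd(1)] d'(2)[OF cd(2)] wide unfolding D_def by linarith+
  let ?P = "convex hull (of_int_pair ` V) :: (real \<times> real) set"
  have "compact ?P" "convex ?P" using assms(1) by (auto intro: finite_imp_compact_convex_hull)
  moreover have "of_int_pair v \<in> ?P" if "v \<in> V" for v using that by (intro hull_inc) auto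
  ultimately have "measure lborel ?P \<ge> real_of_int (D c' - D d') / 2"
    using measure_convex_ge_two_triangles[of ?P "of_int_pair p" "of_int_pair q" "of_int_pair c'" "of_int_pair d'"]
      pq c'(1) d'(1) sides by (simp add: cross2_of_int_pair D_def)
  moreover have "real_of_int l / 2 < real_of_int (D c' - D d') / 2" using sides(3) by simp
  ultimately show ?thesis by (rule less_le_trans[rotated])
qed

lemma std_triangle_contains_base:
  assumes "0 \<le> x" "x \<le> l"
  shows "(x, 0) \<in> convex hull {(0, 0), (l, 0), (0 :: real, 1 :: real)}"
proof -
  have "(x, 0) \<in> closed_segment (0, 0) (l, 0)"
  proof (cases "l = 0")
    case False
    then show ?thesis using assms
      by (auto simp: in_segment intro!: exI[of _ "x / l"])
  qed (use assms in simp)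
  moreover have "closed_segment (0, 0) (l, 0) \<subseteq> convex hull {(0, 0), (l, 0), (0 :: real, 1 :: real)}"
    unfolding segment_convex_hull by (rule hull_mono) auto
  ultimately show ?thesis by blast
qed

lemma is_std_triangle_image_imp_lattice_equivalent:
  assumes "is_std_triangle_image V l"
  shows "lattice_equivalent (convex hull (of_int_pair ` V)) (convex hull {(0, 0), (of_int l, 0), (0, 1)})"
proof -
  let ?T = "convex hull {(0, 0), (of_int l, 0), (0 :: real, 1 :: real)}"
  obtain h where "1 \<le> l" "unimodular_map h"
    and corners: "h (0, 0) \<in> V" "h (l, 0) \<in> V" "h (0, 1) \<in> V"
    and points: "\<forall>v\<in>V. v = h (0, 1) \<or> (\<exists>x. 0 \<le> x \<and> x \<le> l \<and> v = h (x, 0))"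
    using assms unfolding is_std_triangle_image_def by blast
  then obtain a b c d e f where det: "\<bar>a * d - b * c\<bar> = 1" and h: "h = int_aff a b c d e f"
    unfolding unimodular_map_def by blast
  define H :: "real \<times> real \<Rightarrow> _" where "H = int_aff a b c d e f"
  have H: "unimodular_map H" unfolding H_def using det by (rule unimodular_map_int_aff)
  have H_of_int: "H (of_int_pair v) = of_int_pair (h v)" for v
    by (simp add: H_def h of_int_pair_int_aff)
  have "H ` ?T = convex hull {H (0, 0), H (of_int l, 0), H (0, 1)}"
    by (simp add: unimodular_map_convex_hull[OF H])
  also have "\<dots> \<subseteq> convex hull (of_int_pair ` V)"
    using corners H_of_int[of "(0, 0)"] H_of_int[of "(l, 0)"] H_of_int[of "(0, 1)"]
    by (intro hull_mono) (auto simp: of_int_pair_def)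
  finally have "H ` ?T \<subseteq> convex hull (of_int_pair ` V)" .
  moreover have "convex hull (of_int_pair ` V) \<subseteq> H ` ?T"
  proof (intro hull_minimal)
    show "convex (H ` ?T)" by (simp add: unimodular_map_convex_hull[OF H])
    show "of_int_pair ` V \<subseteq> H ` ?T"
    proof (rule image_subsetI)
      fix v assume "v \<in> V"
      with points consider "v = h (0, 1)" | x where "0 \<le> x" "x \<le> l" "v = h (x, 0)" by blast
      then show "of_int_pair v \<in> H ` ?T"
      proof cases
        case 1
        then have "of_int_pair v = H (0, 1)" using H_of_int[of "(0, 1)"] by (simp add: of_int_pair_def)
        then show ?thesis by (simp add: hull_inc)
      next
        case 2
        then have "of_int_pair v = H (of_int x, 0)" using H_of_int[of "(x, 0)"] by (simp add: of_int_pair_def)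
        moreover have "(of_int x, 0) \<in> ?T" using 2 by (intro std_triangle_contains_base) simp_all
        ultimately show ?thesis by blast
      qed
    qed
  qed
  ultimately have "convex hull (of_int_pair ` V) = H ` ?T" by blast
  moreover obtain g where "unimodular_map g" "\<And>p. g (H p) = p"
    using unimodular_map_inverse[OF H] by blast
  ultimately have "g ` (convex hull (of_int_pair ` V)) = ?T"
    by (simp add: image_image)
  then show ?thesis
    unfolding lattice_equivalent_def affine_unimodular_iff_unimodular_map
    using \<open>unimodular_map g\<close> by blast
qed

lemma lattice_polygon_size_certificate:
  assumes "lattice_polygon P" "area P \<noteq> 0"
  obtains l where "0 \<le> l" "\<exists>\<phi>. affine_unimodular \<phi> \<and> \<phi> ` P \<subseteq> scaled_square l"
    "l / 2 < area P \<or> lattice_equivalent P (convex hull {(0, 0), (l, 0), (0, 1)})"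
proof -
  obtain V where "finite V" and P: "P = convex hull (of_int_pair ` V)"
    using lattice_polygon_obtains_int_vertices[OF assms(1)] by blast
  have "V \<noteq> {}"
  proof
    assume "V = {}"
    then have "P = {}" by (simp add: P)
    then show False using assms(2) by (simp add: area_def)
  qed
  have not_collinear: "\<exists>u\<in>V. \<exists>v\<in>V. a * (fst u - fst v) + b * (snd u - snd v) \<noteq> 0"
    if "(a, b) \<noteq> (0, 0)" for a b
    using measure_convex_hull_collinear[OF \<open>finite V\<close> that] assms(2) by (auto simp: P area_def)
  obtain l where l: "size_certificate V l"
    using size_certificate_exists[OF \<open>finite V\<close> \<open>V \<noteq> {}\<close> not_collinear] by blast
  show thesis
  proof (rule that[of "of_int l"])
    show "0 \<le> real_of_int l" using l by (simp add: size_certificate_def)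
    show "\<exists>\<phi>. affine_unimodular \<phi> \<and> \<phi> ` P \<subseteq> scaled_square (of_int l)"
      using l fits_square_imp_scaled_square unfolding size_certificate_def P by metis
    show "of_int l / 2 < area P \<or> lattice_equivalent P (convex hull {(0, 0), (of_int l, 0), (0, 1)})"
      using l has_wide_quadrangle_imp_measure[OF \<open>finite V\<close>] is_std_triangle_image_imp_lattice_equivalent
      unfolding size_certificate_def P area_def by blast
  qed
qed

lemma ls_square_bounds:
  assumes "0 \<le> l" "affine_unimodular \<phi>" "\<phi> ` P \<subseteq> scaled_square l"
  shows "0 \<le> ls_square P" "ls_square P \<le> l"
proof -
  define L where "L = {l. 0 \<le> l \<and> (\<exists>\<phi>. affine_unimodular \<phi> \<and> \<phi> ` P \<subseteq> scaled_square l)}"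
  have "l \<in> L" using assms unfolding L_def by blast
  then show "ls_square P \<le> l"
    unfolding ls_square_def L_def[symmetric] by (rule cInf_lower) (auto simp: L_def bdd_below_def)
  show "0 \<le> ls_square P"
    unfolding ls_square_def L_def[symmetric] using \<open>l \<in> L\<close> by (intro cInf_greatest) (auto simp: L_def)
qed

theorem mainTheorem5:
  fixes P :: "(real \<times> real) set"
  assumes "lattice_polygon P"
    and "area P \<noteq> 0"
  shows "area P \<ge> ls_square P / 2 \<and>
         (area P = ls_square P / 2 \<longleftrightarrow>
            lattice_equivalent P (convex hull {(0, 0), (ls_square P, 0), (0, 1)}))"
proof -
  obtain l where "0 \<le> l" and "\<exists>\<phi>. affine_unimodular \<phi> \<and> \<phi> ` P \<subseteq> scaled_square l"
    and alternative: "l / 2 < area P \<or> lattice_equivalent P (convex hull {(0, 0), (l, 0), (0, 1)})"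
    using lattice_polygon_size_certificate[OF assms] by blast
  then have ls: "0 \<le> ls_square P" "ls_square P \<le> l"
    using ls_square_bounds by blast+
  have triangle_area: "area P = h / 2"
    if "lattice_equivalent P (convex hull {(0, 0), (h, 0), (0, 1)})" "0 \<le> h" for h
    using measure_lattice_equivalent_std_triangle[OF that] by (simp add: area_def)
  from alternative show ?thesis
  proof
    assume "l / 2 < area P"
    then show ?thesis using ls triangle_area[of "ls_square P"] by auto
  next
    assume equivalent: "lattice_equivalent P (convex hull {(0, 0), (l, 0), (0, 1)})"
    then have "area P = l / 2" using triangle_area \<open>0 \<le> l\<close> by blast
    then show ?thesis using ls equivalent triangle_area[of "ls_square P"] by auto
  qed
qed

end
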